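(* Let $0<p<1/2$ be a constant and let $T$ be a tree with $n$ edges accessed through a 2-sided noisy oracle with error probability $p$. Consider the following algorithm, run with parameters $\varepsilon=\delta=0.01$: set $c=\lceil \log_{\frac{1-p}{p}}(1/\delta)\rceil$ and a global budget $B=\lceil \frac{1}{\varepsilon}\cdot\frac{1}{1-2p}\rceil\cdot c\cdot n$; process the edges of $T$ in a fixed order; for the current edge, starting a counter at $0$, while the counter is $<c$ and $B>0$, query the edge, decrease $B$ by $1$, and add $+1$ to the counter on ``Yes'' and $-1$ on ``No''; after the loop, if $B=0$ output False and stop, otherwise continue to the next edge; if all edges are processed output True. Then this algorithm outputs True on connected trees with probability at least $0.99$, outputs False on disconnected trees with probability at least $0.99$, and uses $O(n)$ queries.
   Context: Noisy edge-query model: each edge is either realized or non-realized (fixed arbitrarily in advance). An oracle answers queries ``Is edge $e$ realized?'' with ``Yes''/``No''; each query costs $1$; answers to distinct queries (including repeated queries of the same edge) are independent. In the 2-sided error regime each answer is wrong with probability $p<1/2$ (a constant) and correct with probability $1-p$. A tree is connected if all its edges are realized and disconnected otherwise. *)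

theory Defs
  imports "HOL-Probability.Probability"
begin

text \<open>Every call is a fresh, independent draw.\<close>
definition noisy_answer :: "real \<Rightarrow> bool \<Rightarrow> bool pmf" where
  "noisy_answer p r = map_pmf (\<lambda>correct. if correct then r else \<not> r) (bernoulli_pmf (1 - p))"

fun edge_loop :: "real \<Rightarrow> nat \<Rightarrow> bool \<Rightarrow> nat \<Rightarrow> int \<Rightarrow> (nat \<times> int) pmf" where
  "edge_loop p c r 0 k = return_pmf (0, k)"
| "edge_loop p c r (Suc B) k =
     (if int c \<le> k then return_pmf (Suc B, k)
      else bind_pmf (noisy_answer p r)
             (\<lambda>a. edge_loop p c r B (if a then k + 1 else k - 1)))"

fun process :: "real \<Rightarrow> nat \<Rightarrow> ('e \<Rightarrow> bool) \<Rightarrow> 'e list \<Rightarrow> nat \<Rightarrow> (bool \<times> nat) pmf" where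
  "process p c rl [] B = return_pmf (True, B)"
| "process p c rl (e # es) B =
     bind_pmf (edge_loop p c (rl e) B 0)
       (\<lambda>(B', k). if B' = 0 then return_pmf (False, 0) else process p c rl es B')"

definition alg_c :: "real \<Rightarrow> real \<Rightarrow> nat" where
  "alg_c p \<delta> = nat \<lceil>log ((1 - p) / p) (1 / \<delta>)\<rceil>"

definition alg_budget :: "real \<Rightarrow> real \<Rightarrow> real \<Rightarrow> nat \<Rightarrow> nat" where
  "alg_budget p \<epsilon> \<delta> n = nat \<lceil>(1 / \<epsilon>) * (1 / (1 - 2 * p))\<rceil> * alg_c p \<delta> * n"

definition noisy_tree_test ::
  "real \<Rightarrow> real \<Rightarrow> real \<Rightarrow> ('e \<Rightarrow> bool) \<Rightarrow> 'e list \<Rightarrow> (bool \<times> nat) pmf" where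
  "noisy_tree_test p \<epsilon> \<delta> rl es =
     (let B = alg_budget p \<epsilon> \<delta> (length es)
      in map_pmf (\<lambda>(out, B'). (out, B - B')) (process p (alg_c p \<delta>) rl es B))"

definition tree_connected :: "('e \<Rightarrow> bool) \<Rightarrow> 'e list \<Rightarrow> bool" where
  "tree_connected rl es \<longleftrightarrow> (\<forall>e\<in>set es. rl e)"

end

theory Submission
  imports Defs
begin

text \<open>While an edge is being tested, its counter performs a \<open>\<plusminus>1\<close> random walk that stops at \<open>c\<close>.
  For a non-realized edge the walk drifts downwards, and by the gambler's-ruin bound it ever
  reaches \<open>c\<close> with probability at most \<open>(p / (1 - p)) ^ c \<le> \<delta>\<close>; hence a disconnected tree
  is accepted with probability at most \<open>\<delta>\<close>. For a realized edge the walk drifts upwards at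
  rate \<open>1 - 2p\<close>, so the expected number of queries spent on a connected tree is at most
  \<open>n c / (1 - 2p) \<le> \<epsilon> B\<close>. The algorithm rejects only after spending the whole budget \<open>B\<close>,
  so by Markov's inequality it rejects a connected tree with probability at most \<open>\<epsilon>\<close>.\<close>

abbreviation E :: "'a pmf \<Rightarrow> ('a \<Rightarrow> real) \<Rightarrow> real" where
  "E M f \<equiv> measure_pmf.expectation M f"

lemma expectation_bind_pmf_finite:
  fixes f :: "'b \<Rightarrow> real"
  assumes M: "finite (set_pmf M)" and N: "\<And>x. x \<in> set_pmf M \<Longrightarrow> finite (set_pmf (N x))"
  shows "E (bind_pmf M N) f = E M (\<lambda>x. E (N x) f)"
  using pmf_expectation_bind[OF M N subset_refl, where h=f]
  by (simp add: integral_measure_pmf_real[OF M] mult.commute)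

lemma expectation_noisy_answer:
  fixes f :: "bool \<Rightarrow> real"
  assumes "0 \<le> p" "p \<le> 1"
  shows "E (noisy_answer p r) f = (1 - p) * f r + p * f (\<not> r)"
  using assms by (simp add: noisy_answer_def)

lemma finite_set_pmf_edge_loop: "finite (set_pmf (edge_loop p c r B k))"
  by (induction B arbitrary: k) auto

lemma expectation_edge_loop_Suc:
  fixes f :: "nat \<times> int \<Rightarrow> real"
  assumes "0 \<le> p" "p \<le> 1" "k < int c"
  shows "E (edge_loop p c r (Suc B) k) f
    = (1 - p) * E (edge_loop p c r B (if r then k + 1 else k - 1)) f
      + p * E (edge_loop p c r B (if r then k - 1 else k + 1)) f"
  using assms
  by (simp add: expectation_bind_pmf_finite finite_set_pmf_edge_loop expectation_noisy_answer)

lemma edge_loop_budget_le: "x \<in> set_pmf (edge_loop p c r B k) \<Longrightarrow> fst x \<le> B"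
  by (induction B arbitrary: k) (force split: if_splits intro: le_SucI)+

text \<open>\<open>q ^ (c - k)\<close> with \<open>q = p / (1 - p)\<close> is harmonic for the walk of a non-realized edge,
  since \<open>(1 - p) q\<^sup>2 + p = q\<close> (gambler's ruin).\<close>
lemma prob_edge_loop_unrealized_survives:
  assumes p: "0 < p" "p < 1/2"
  shows "measure_pmf.prob (edge_loop p c False B k) {x. fst x \<noteq> 0} \<le> (p / (1 - p)) ^ nat (int c - k)"
proof (induction B arbitrary: k)
  case 0
  then show ?case using p by simp
next
  case (Suc B)
  show ?case
  proof (cases "int c \<le> k")
    case True
    then show ?thesis by simp
  next
    case False
    define q where "q = p / (1 - p)"
    define m where "m = nat (int c - k - 1)"
    have exponents: "nat (int c - k) = Suc m" "nat (int c - (k + 1)) = m" "nat (int c - (k - 1)) = Suc (Suc m)"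
      using False by (auto simp: m_def)
    have "(1 - p) * q = p"
      using p by (simp add: q_def field_simps)
    then have "(1 - p) * q * q + p = p * q + p"
      by (simp only:)
    also have "\<dots> = p * (q + 1)"
      by (simp add: algebra_simps)
    also have "\<dots> = q"
      using p by (simp add: q_def field_simps)
    finally have q_fixed: "(1 - p) * q * q + p = q" .
    have "(1 - p) * q ^ Suc (Suc m) + p * q ^ m = q ^ m * ((1 - p) * q * q + p)"
      by (simp add: algebra_simps)
    also have "\<dots> = q ^ Suc m"
      by (simp only: q_fixed power_Suc2)
    finally have harmonic: "(1 - p) * q ^ Suc (Suc m) + p * q ^ m = q ^ Suc m" .
    let ?P = "\<lambda>j. measure_pmf.prob (edge_loop p c False B j) {x. fst x \<noteq> 0}"
    have "measure_pmf.prob (edge_loop p c False (Suc B) k) {x. fst x \<noteq> 0} = (1 - p) * ?P (k - 1) + p * ?P (k + 1)"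
      using expectation_edge_loop_Suc[of p k c False B "indicator {x. fst x \<noteq> 0}"] p False by simp
    also have "\<dots> \<le> (1 - p) * q ^ Suc (Suc m) + p * q ^ m"
      using Suc.IH[of "k - 1"] Suc.IH[of "k + 1"] p exponents unfolding q_def
      by (intro add_mono mult_left_mono) auto
    finally show ?thesis using exponents harmonic by (simp add: q_def)
  qed
qed

text \<open>For a realized edge the counter drifts upwards at rate \<open>1 - 2p\<close>, so the expected
  number of queries needed to raise it from \<open>k\<close> to \<open>c\<close> is \<open>(c - k) / (1 - 2p)\<close>.\<close>
lemma expectation_edge_loop_realized:
  assumes p: "0 < p" "p < 1/2" and "k \<le> int c"
  shows "E (edge_loop p c True B k) (\<lambda>x. real (fst x)) \<ge> real B - (int c - k) / (1 - 2 * p)"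
  using assms(3)
proof (induction B arbitrary: k)
  case 0
  then show ?case using p by simp
next
  case (Suc B)
  show ?case
  proof (cases "int c \<le> k")
    case True
    then show ?thesis using p Suc.prems by simp
  next
    case False
    let ?P = "\<lambda>j. E (edge_loop p c True B j) (\<lambda>x. real (fst x))"
    define d where "d = real_of_int (int c - k)"
    define u where "u = 1 / (1 - 2 * p)"
    have u: "(1 - 2 * p) * u = 1"
      using p by (simp add: u_def)
    have "E (edge_loop p c True (Suc B) k) (\<lambda>x. real (fst x)) = (1 - p) * ?P (k + 1) + p * ?P (k - 1)"
      using expectation_edge_loop_Suc[of p k c True B] p False by simp
    also have "\<dots> \<ge> (1 - p) * (real B - (d - 1) * u) + p * (real B - (d + 1) * u)"
      using Suc.IH[of "k + 1"] Suc.IH[of "k - 1"] False p unfolding d_def u_def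
      by (intro add_mono mult_left_mono) (auto simp: algebra_simps)
    also have "(1 - p) * (real B - (d - 1) * u) + p * (real B - (d + 1) * u) = real B - d * u + (1 - 2 * p) * u"
      by (simp add: algebra_simps)
    also have "\<dots> = real (Suc B) - d / (1 - 2 * p)"
      by (simp only: u) (simp add: u_def)
    finally show ?thesis by (simp add: d_def)
  qed
qed

lemma finite_set_pmf_process: "finite (set_pmf (process p c rl es B))"
  by (induction es arbitrary: B) (auto simp: finite_set_pmf_edge_loop split: if_splits)

lemma process_budget_le: "x \<in> set_pmf (process p c rl es B) \<Longrightarrow> snd x \<le> B"
  by (induction es arbitrary: B) (fastforce split: if_splits dest: edge_loop_budget_le intro: le_trans)+

lemma process_rejects_with_empty_budget: "x \<in> set_pmf (process p c rl es B) \<Longrightarrow> \<not> fst x \<Longrightarrow> snd x = 0"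
  by (induction es arbitrary: B) (auto split: if_splits)

lemma expectation_process_Cons:
  fixes f :: "bool \<times> nat \<Rightarrow> real"
  shows "E (process p c rl (e # es) B) f
    = E (edge_loop p c (rl e) B 0) (\<lambda>y. if fst y = 0 then f (False, 0) else E (process p c rl es (fst y)) f)"
  by (simp add: expectation_bind_pmf_finite finite_set_pmf_edge_loop finite_set_pmf_process
      split_beta if_distrib[of "\<lambda>M. E M f"] cong: if_cong)

lemma prob_process_accepts_unrealized:
  assumes p: "0 < p" "p < 1/2" and "\<exists>e\<in>set es. \<not> rl e"
  shows "measure_pmf.prob (process p c rl es B) {x. fst x} \<le> (p / (1 - p)) ^ c"
  using assms(3)
proof (induction es arbitrary: B)
  case Nil
  then show ?case by simp
next
  case (Cons e es)
  let ?L = "edge_loop p c (rl e) B 0"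
  let ?g = "\<lambda>y. if fst y = 0 then 0 else measure_pmf.prob (process p c rl es (fst y)) {x. fst x}"
  have split: "measure_pmf.prob (process p c rl (e # es) B) {x. fst x} = E ?L ?g"
    using expectation_process_Cons[where f="indicator {x. fst x}" and rl=rl and e=e and B=B] by (simp cong: if_cong)
  have integrable: "integrable (measure_pmf ?L) f" for f :: "nat \<times> int \<Rightarrow> real"
    by (simp add: integrable_measure_pmf_finite finite_set_pmf_edge_loop)
  show ?case
  proof (cases "rl e")
    case False
    have "E ?L ?g \<le> E ?L (indicator {x. fst x \<noteq> 0})"
      by (intro integral_mono integrable) (auto simp: indicator_def)
    also have "\<dots> \<le> (p / (1 - p)) ^ c"
      using prob_edge_loop_unrealized_survives[OF p, of c B 0] False by simp
    finally show ?thesis using split by simp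
  next
    case True
    with Cons.prems have "\<exists>e\<in>set es. \<not> rl e" by auto
    then have "E ?L ?g \<le> E ?L (\<lambda>_. (p / (1 - p)) ^ c)"
      using Cons.IH by (intro integral_mono integrable) (use p in auto)
    then show ?thesis using split by simp
  qed
qed

lemma expectation_process_realized:
  assumes p: "0 < p" "p < 1/2" and "\<forall>e\<in>set es. rl e"
  shows "E (process p c rl es B) (\<lambda>x. real (snd x)) \<ge> real B - length es * real c / (1 - 2 * p)"
  using assms(3)
proof (induction es arbitrary: B)
  case Nil
  then show ?case by simp
next
  case (Cons e es)
  define m where "m = length es * real c / (1 - 2 * p)"
  have "m \<ge> 0" using p by (simp add: m_def)
  let ?L = "edge_loop p c True B 0"
  let ?g = "\<lambda>y. if fst y = 0 then 0 else E (process p c rl es (fst y)) (\<lambda>x. real (snd x))"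
  have integrable: "integrable (measure_pmf ?L) f" for f :: "nat \<times> int \<Rightarrow> real"
    by (simp add: integrable_measure_pmf_finite finite_set_pmf_edge_loop)
  have "E (process p c rl (e # es) B) (\<lambda>x. real (snd x)) = E ?L ?g"
    using expectation_process_Cons[where f="\<lambda>x. real (snd x)" and rl=rl and e=e and B=B] Cons.prems by (simp cong: if_cong)
  also have "\<dots> \<ge> E ?L (\<lambda>y. real (fst y) - m)"
    using Cons.IH Cons.prems \<open>m \<ge> 0\<close> by (intro integral_mono integrable) (auto simp: m_def)
  also have "E ?L (\<lambda>y. real (fst y) - m) = E ?L (\<lambda>y. real (fst y)) - m"
    by (simp add: integrable)
  also have "E ?L (\<lambda>y. real (fst y)) \<ge> real B - real c / (1 - 2 * p)"
    using expectation_edge_loop_realized[OF p, of 0 c B] by simp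
  moreover have "real (length (e # es)) * real c / (1 - 2 * p) = real c / (1 - 2 * p) + m"
    by (simp add: m_def add_divide_distrib[symmetric] algebra_simps)
  ultimately show ?case by linarith
qed

text \<open>A rejecting run has exhausted the budget, so the remaining budget is at most
  \<open>B\<close> times the indicator of acceptance (a Markov-type argument).\<close>
lemma prob_process_accepts_realized:
  assumes p: "0 < p" "p < 1/2" and "\<forall>e\<in>set es. rl e"
  shows "real B * measure_pmf.prob (process p c rl es B) {x. fst x} \<ge> real B - length es * real c / (1 - 2 * p)"
proof -
  let ?P = "process p c rl es B"
  have "real B - length es * real c / (1 - 2 * p) \<le> E ?P (\<lambda>x. real (snd x))"
    by (rule expectation_process_realized[OF assms])
  also have "\<dots> \<le> E ?P (\<lambda>x. real B * indicator {x. fst x} x)"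
    using process_budget_le[of _ p c rl es B] process_rejects_with_empty_budget[of _ p c rl es B]
    by (intro integral_mono_AE) (auto simp: integrable_measure_pmf_finite finite_set_pmf_process
        AE_measure_pmf_iff indicator_def)
  also have "\<dots> = real B * measure_pmf.prob ?P {x. fst x}"
    by simp
  finally show ?thesis .
qed

lemma noise_ratio_pow_alg_c_le:
  assumes "0 < p" "p < 1/2" "0 < \<delta>"
  shows "(p / (1 - p)) ^ alg_c p \<delta> \<le> \<delta>"
proof -
  define b where "b = (1 - p) / p"
  have "b > 1" using assms by (simp add: b_def field_simps)
  have "1 / \<delta> = b powr log b (1 / \<delta>)"
    using \<open>b > 1\<close> assms by simp
  also have "\<dots> \<le> b powr real (alg_c p \<delta>)"
    using \<open>b > 1\<close> by (intro powr_mono) (auto simp: alg_c_def b_def, linarith)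
  also have "\<dots> = b ^ alg_c p \<delta>"
    using \<open>b > 1\<close> by (simp add: powr_realpow)
  finally have "1 / b ^ alg_c p \<delta> \<le> \<delta>"
    using assms \<open>b > 1\<close> by (simp add: field_simps)
  moreover have "p / (1 - p) = 1 / b" by (simp add: b_def)
  ultimately show ?thesis
    by (simp add: power_one_over)
qed

lemma alg_c_pos:
  assumes "0 < p" "p < 1/2" "0 < \<delta>" "\<delta> < 1"
  shows "0 < alg_c p \<delta>"
proof -
  have "(1 - p) / p > 1" using assms by (simp add: field_simps)
  then have "log ((1 - p) / p) (1 / \<delta>) > 0" using assms by simp
  then show ?thesis by (simp add: alg_c_def)
qed

lemma expected_queries_bound_le_alg_budget:
  fixes \<epsilon> :: real
  assumes "p < 1/2" "0 < \<epsilon>"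
  shows "real n * alg_c p \<delta> / (1 - 2 * p) \<le> \<epsilon> * alg_budget p \<epsilon> \<delta> n"
proof -
  have "1 / (1 - 2 * p) = \<epsilon> * ((1 / \<epsilon>) * (1 / (1 - 2 * p)))"
    using assms by simp
  also have "\<dots> \<le> \<epsilon> * nat \<lceil>(1 / \<epsilon>) * (1 / (1 - 2 * p))\<rceil>"
    using assms by (intro mult_left_mono real_nat_ceiling_ge) auto
  finally have "1 / (1 - 2 * p) \<le> \<epsilon> * nat \<lceil>(1 / \<epsilon>) * (1 / (1 - 2 * p))\<rceil>" .
  then have "n * real (alg_c p \<delta>) * (1 / (1 - 2 * p)) \<le> n * real (alg_c p \<delta>) * (\<epsilon> * nat \<lceil>(1 / \<epsilon>) * (1 / (1 - 2 * p))\<rceil>)"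
    by (intro mult_left_mono) auto
  then show ?thesis by (simp add: alg_budget_def algebra_simps)
qed

lemma prob_noisy_tree_test_output:
  "measure_pmf.prob (noisy_tree_test p \<epsilon> \<delta> rl es) {x. fst x = b}
    = measure_pmf.prob (process p (alg_c p \<delta>) rl es (alg_budget p \<epsilon> \<delta> (length es))) {x. fst x = b}"
  by (simp add: noisy_tree_test_def Let_def vimage_def split_beta)

theorem noisy_tree_test_accepts_connected:
  assumes p: "0 < p" "p < 1/2" and "0 < \<epsilon>" "0 < \<delta>" "\<delta> < 1" and "tree_connected rl es"
  shows "measure_pmf.prob (noisy_tree_test p \<epsilon> \<delta> rl es) {x. fst x} \<ge> 1 - \<epsilon>"
proof (cases "es = []")
  case True
  then show ?thesis
    using \<open>0 < \<epsilon>\<close> by (simp add: noisy_tree_test_def)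
next
  case False
  define B where "B = alg_budget p \<epsilon> \<delta> (length es)"
  define \<pi> where "\<pi> = measure_pmf.prob (process p (alg_c p \<delta>) rl es B) {x. fst x}"
  have "0 < nat \<lceil>(1 / \<epsilon>) * (1 / (1 - 2 * p))\<rceil>"
    using assms by simp
  then have "real B > 0"
    using False alg_c_pos[OF p \<open>0 < \<delta>\<close> \<open>\<delta> < 1\<close>] by (simp add: B_def alg_budget_def)
  have "real B * \<pi> \<ge> real B - length es * real (alg_c p \<delta>) / (1 - 2 * p)"
    using prob_process_accepts_realized[OF p] \<open>tree_connected rl es\<close>
    by (simp add: \<pi>_def tree_connected_def)
  moreover have "length es * real (alg_c p \<delta>) / (1 - 2 * p) \<le> \<epsilon> * real B"
    using expected_queries_bound_le_alg_budget[OF \<open>p < 1/2\<close> \<open>0 < \<epsilon>\<close>] by (simp add: B_def)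
  ultimately have "real B * \<pi> \<ge> real B * (1 - \<epsilon>)"
    by (simp add: algebra_simps)
  then have "\<pi> \<ge> 1 - \<epsilon>"
    using \<open>real B > 0\<close> by simp
  then show ?thesis
    using prob_noisy_tree_test_output[of p \<epsilon> \<delta> rl es True]
    by (simp add: \<pi>_def B_def)
qed

theorem noisy_tree_test_rejects_disconnected:
  assumes p: "0 < p" "p < 1/2" and "0 < \<delta>" and "\<not> tree_connected rl es"
  shows "measure_pmf.prob (noisy_tree_test p \<epsilon> \<delta> rl es) {x. \<not> fst x} \<ge> 1 - \<delta>"
proof -
  let ?P = "process p (alg_c p \<delta>) rl es (alg_budget p \<epsilon> \<delta> (length es))"
  have "measure_pmf.prob ?P {x. fst x} \<le> \<delta>"
    using prob_process_accepts_unrealized[OF p] noise_ratio_pow_alg_c_le[OF p \<open>0 < \<delta>\<close>]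
      \<open>\<not> tree_connected rl es\<close> unfolding tree_connected_def by (meson order_trans)
  moreover have "measure_pmf.prob ?P {x. \<not> fst x} = 1 - measure_pmf.prob ?P {x. fst x}"
    using measure_pmf.prob_compl[of "{x. fst x}" ?P] by (simp add: Compl_eq_Diff_UNIV[symmetric] Collect_neg_eq)
  ultimately show ?thesis
    using prob_noisy_tree_test_output[of p \<epsilon> \<delta> rl es False]
    by simp
qed

lemma noisy_tree_test_queries_le:
  "x \<in> set_pmf (noisy_tree_test p \<epsilon> \<delta> rl es) \<Longrightarrow> snd x \<le> alg_budget p \<epsilon> \<delta> (length es)"
  by (auto simp: noisy_tree_test_def Let_def)

theorem corollary1:
  fixes p :: real
  assumes "0 < p" and "p < 1/2"
  shows "(\<forall>(rl :: 'e \<Rightarrow> bool) (es :: 'e list). distinct es \<longrightarrow> tree_connected rl es \<longrightarrow>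
            measure_pmf.prob (noisy_tree_test p 0.01 0.01 rl es) {x. fst x} \<ge> 0.99)
       \<and> (\<forall>(rl :: 'e \<Rightarrow> bool) (es :: 'e list). distinct es \<longrightarrow> \<not> tree_connected rl es \<longrightarrow>
            measure_pmf.prob (noisy_tree_test p 0.01 0.01 rl es) {x. \<not> fst x} \<ge> 0.99)
       \<and> (\<exists>K::real. \<forall>(rl :: 'e \<Rightarrow> bool) (es :: 'e list).
            \<forall>x\<in>set_pmf (noisy_tree_test p 0.01 0.01 rl es). real_of_nat (snd x) \<le> K * length es)"
proof (intro conjI allI impI)
  fix rl :: "'e \<Rightarrow> bool" and es :: "'e list"
  show "measure_pmf.prob (noisy_tree_test p 0.01 0.01 rl es) {x. fst x} \<ge> 0.99"
    if "tree_connected rl es"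
    using noisy_tree_test_accepts_connected[OF assms _ _ _ that, where \<epsilon>="0.01" and \<delta>="0.01"] by simp
  show "measure_pmf.prob (noisy_tree_test p 0.01 0.01 rl es) {x. \<not> fst x} \<ge> 0.99"
    if "\<not> tree_connected rl es"
    using noisy_tree_test_rejects_disconnected[OF assms _ that, where \<epsilon>="0.01" and \<delta>="0.01"] by simp
next
  let ?K = "real (nat \<lceil>(1 / 0.01) * (1 / (1 - 2 * p))\<rceil> * alg_c p 0.01)"
  have "real (snd x) \<le> ?K * length es"
    if "x \<in> set_pmf (noisy_tree_test p 0.01 0.01 rl es)" for rl :: "'e \<Rightarrow> bool" and es x
    using noisy_tree_test_queries_le[OF that] by (simp add: alg_budget_def flip: of_nat_mult)
  then show "\<exists>K::real. \<forall>(rl :: 'e \<Rightarrow> bool) es. \<forall>x\<in>set_pmf (noisy_tree_test p 0.01 0.01 rl es).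
      real (snd x) \<le> K * length es"
    by blast
qed

end
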